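(* In the setting described in the context (with any one of the three learning-rate setups (a), (b), (c)), there exist a deterministic constant $C$ and an integer $m_0$ such that for all $m\ge m_0$, $$\|z_{1,m}\|_m\le T_m^2\,C\,\big(\|w_{t_m}-w_*\|_m+1\big).$$
   Context: Setting. $\{Y_t\}_{t\ge0}$ is a Markov chain on a measurable space $\mathcal{Y}$ with transition kernel $P$ and unique stationary distribution $d_{\mathcal{Y}}$, with $\int|P^n(y,y')-d_{\mathcal{Y}}(y')|\,\mathrm{d}y'\le C_A\varrho^n$ for all $y,n$, some $\varrho\in[0,1)$. $H:\mathbb{R}^d\times\mathcal{Y}\to\mathbb{R}^d$, $h(w)=\mathbb{E}_{y\sim d_{\mathcal{Y}}}[H(w,y)]$; for some norm $\|\cdot\|$ and $\kappa\in[0,1)$, $\|h(w)-h(w')\|\le\kappa\|w-w'\|$, with fixed point $w_*$; $\|H(w,y)-H(w',y)\|\le L_h\|w-w'\|$ for all $w,w',y$ and $\sup_y\|H(0,y)\|<\infty$. Iterates: $w_0\in\mathbb{R}^d$, $w_{t+1}=w_t+\alpha_t(H(w_t,Y_{t+1})-w_t)$. Put $G(w,y)=H(w,y)-w$, $g(w)=h(w)-w$. Learning-rate setups with $C_\alpha>0$: (a) $\alpha_t=\frac{C_\alpha}{t+3}$, $T_m=\frac{C_\alpha\ln^{\nu_1}(m+3)}{m+3}$, $\nu_1\in(0,1)$; (b) $\alpha_t=\frac{C_\alpha}{(t+3)^\nu}$, $\nu\in(\frac23,1)$, $T_m=\frac{C_\alpha}{(m+3)^{\nu_2}}$, $\frac12<\nu_2<\frac\nu{2-\nu}$;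 (c) $\alpha_t=\frac{C_\alpha}{(t+3)\ln^\nu(t+3)}$, $\nu\in(0,1)$, $T_m=\frac{C_\alpha}{m+3}$. Anchors: $t_0=0$, $t_{m+1}=\min\{k:\sum_{t=t_m}^{k-1}\alpha_t\ge T_m\}$. Define $z_{1,m}=\sum_{t=t_m}^{t_{m+1}-1}\alpha_t\big(G(w_t,Y_{t+1})-G(w_{t_m},Y_{t+1})\big)$. The norm $\|\cdot\|_m$: fix a norm $\|\cdot\|_s$ such that $\frac12\|\cdot\|_s^2$ is smooth w.r.t. $\|\cdot\|_s$ and $\xi>0$; $\|\cdot\|_m$ is the norm with $\frac12\|w\|_m^2=\inf_u\{\frac12\|u\|^2+\frac1{2\xi}\|w-u\|_s^2\}$. *)

theory Defs
  imports "HOL-Probability.Probability"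
begin

definition is_norm :: "('a::real_vector \<Rightarrow> real) \<Rightarrow> bool" where
  "is_norm N \<longleftrightarrow> (\<forall>x. N x = 0 \<longleftrightarrow> x = 0) \<and> (\<forall>x y. N (x + y) \<le> N x + N y)
     \<and> (\<forall>c x. N (c *\<^sub>R x) = \<bar>c\<bar> * N x)"

text \<open>1/2 N(.)^2 is smooth w.r.t. N: differentiable with N-Lipschitz gradient
  (gradient difference measured in the dual norm).\<close>
definition half_sq_smooth :: "('a::real_normed_vector \<Rightarrow> real) \<Rightarrow> bool" where
  "half_sq_smooth N \<longleftrightarrow> (\<exists>L Df. (\<forall>x. ((\<lambda>u. (N u)\<^sup>2 / 2) has_derivative Df x) (at x))
       \<and> (\<forall>x y v. \<bar>Df x v - Df y v\<bar> \<le> L * N (x - y) * N v))"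

definition Mnorm :: "('a::real_vector \<Rightarrow> real) \<Rightarrow> ('a \<Rightarrow> real) \<Rightarrow> real \<Rightarrow> 'a \<Rightarrow> real" where
  "Mnorm N Ns \<xi> w = sqrt (2 * (INF u. (N u)\<^sup>2 / 2 + (Ns (w - u))\<^sup>2 / (2 * \<xi>)))"

fun kernel_pow :: "'y measure \<Rightarrow> ('y \<Rightarrow> 'y measure) \<Rightarrow> nat \<Rightarrow> 'y \<Rightarrow> 'y measure" where
  "kernel_pow M P 0 y = return M y"
| "kernel_pow M P (Suc n) y = bind (kernel_pow M P n y) P"

definition setup_a :: "real \<Rightarrow> (nat \<Rightarrow> real) \<Rightarrow> (nat \<Rightarrow> real) \<Rightarrow> bool" where
  "setup_a C\<alpha> \<alpha> T \<longleftrightarrow> (\<exists>\<nu>1. 0 < \<nu>1 \<and> \<nu>1 < 1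
     \<and> \<alpha> = (\<lambda>t. C\<alpha> / (real t + 3))
     \<and> T = (\<lambda>m. C\<alpha> * (ln (real m + 3)) powr \<nu>1 / (real m + 3)))"

definition setup_b :: "real \<Rightarrow> (nat \<Rightarrow> real) \<Rightarrow> (nat \<Rightarrow> real) \<Rightarrow> bool" where
  "setup_b C\<alpha> \<alpha> T \<longleftrightarrow> (\<exists>\<nu> \<nu>2. 2/3 < \<nu> \<and> \<nu> < 1 \<and> 1/2 < \<nu>2 \<and> \<nu>2 < \<nu> / (2 - \<nu>)
     \<and> \<alpha> = (\<lambda>t. C\<alpha> / (real t + 3) powr \<nu>)
     \<and> T = (\<lambda>m. C\<alpha> / (real m + 3) powr \<nu>2))"

definition setup_c :: "real \<Rightarrow> (nat \<Rightarrow> real) \<Rightarrow> (nat \<Rightarrow> real) \<Rightarrow> bool" where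
  "setup_c C\<alpha> \<alpha> T \<longleftrightarrow> (\<exists>\<nu>. 0 < \<nu> \<and> \<nu> < 1
     \<and> \<alpha> = (\<lambda>t. C\<alpha> / ((real t + 3) * (ln (real t + 3)) powr \<nu>))
     \<and> T = (\<lambda>m. C\<alpha> / (real m + 3)))"

fun anchor :: "(nat \<Rightarrow> real) \<Rightarrow> (nat \<Rightarrow> real) \<Rightarrow> nat \<Rightarrow> nat" where
  "anchor \<alpha> T 0 = 0"
| "anchor \<alpha> T (Suc m) = (LEAST k. (\<Sum>t\<in>{anchor \<alpha> T m..<k}. \<alpha> t) \<ge> T m)"

fun iter :: "('v::real_vector \<Rightarrow> 'y \<Rightarrow> 'v) \<Rightarrow> (nat \<Rightarrow> real) \<Rightarrow> 'v \<Rightarrow> (nat \<Rightarrow> 'y) \<Rightarrow> nat \<Rightarrow> 'v" where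
  "iter H \<alpha> w0 Y 0 = w0"
| "iter H \<alpha> w0 Y (Suc t) = iter H \<alpha> w0 Y t
     + \<alpha> t *\<^sub>R (H (iter H \<alpha> w0 Y t) (Y (Suc t)) - iter H \<alpha> w0 Y t)"

definition z1 :: "('v::real_vector \<Rightarrow> 'y \<Rightarrow> 'v) \<Rightarrow> (nat \<Rightarrow> real) \<Rightarrow> (nat \<Rightarrow> real) \<Rightarrow> 'v
     \<Rightarrow> (nat \<Rightarrow> 'y) \<Rightarrow> nat \<Rightarrow> 'v" where
  "z1 H \<alpha> T w0 Y m =
     (let G = (\<lambda>w y. H w y - w); w = iter H \<alpha> w0 Y; tm = anchor \<alpha> T m in
      \<Sum>t\<in>{tm..<anchor \<alpha> T (Suc m)}. \<alpha> t *\<^sub>R (G (w t) (Y (Suc t)) - G (w tm) (Y (Suc t))))"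

end

theory Submission
  imports Defs
begin

text \<open>The map \<open>G(\<cdot>, y)\<close> is
  \<open>(L_h + 1)\<close>-Lipschitz and grows at most linearly, so a discrete Gronwall argument bounds the
  drift \<open>\<parallel>w_t - w_{t_m}\<parallel>\<close> inside the block \<open>[t_m, t_{m+1})\<close> by \<open>O(T_m) (\<parallel>w_{t_m} - w_*\<parallel> + 1)\<close>;
  here the step sizes of a block sum to at most \<open>2 T_m\<close>, since the block overshoots \<open>T_m\<close> by a
  single step \<open>\<alpha>_t \<le> T_m\<close>. Summing \<open>\<alpha>_t (L_h + 1) \<parallel>w_t - w_{t_m}\<parallel>\<close> over the block gives the factor
  \<open>T_m\<^sup>2\<close>. Finally, all norms on \<open>\<real>\<^sup>d\<close> are equivalent, and \<open>\<parallel>\<cdot>\<parallel>_m\<close> lies between \<open>\<parallel>\<cdot>\<parallel>\<close> and a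
  positive multiple of it.\<close>

lemma is_norm_zero: "is_norm N \<Longrightarrow> N 0 = 0"
  by (simp add: is_norm_def)

lemma is_norm_eq_0_iff: "is_norm N \<Longrightarrow> N x = 0 \<longleftrightarrow> x = 0"
  by (simp add: is_norm_def)

lemma is_norm_triangle: "is_norm N \<Longrightarrow> N (x + y) \<le> N x + N y"
  by (simp add: is_norm_def)

lemma is_norm_scaleR: "is_norm N \<Longrightarrow> N (c *\<^sub>R x) = \<bar>c\<bar> * N x"
  by (simp add: is_norm_def)

lemma is_norm_minus: "is_norm N \<Longrightarrow> N (- x) = N x"
  using is_norm_scaleR[of N "-1" x] by simp

lemma is_norm_nonneg:
  assumes "is_norm N" shows "0 \<le> N x"
proof -
  have "0 = N (x + - x)" using is_norm_zero[OF assms] by simp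
  also have "\<dots> \<le> N x + N (- x)" by (rule is_norm_triangle[OF assms])
  also have "\<dots> = 2 * N x" by (simp add: is_norm_minus[OF assms])
  finally show ?thesis by simp
qed

lemma is_norm_diff_le: "is_norm N \<Longrightarrow> N (x - y) \<le> N x + N y"
  using is_norm_triangle[of N x "- y"] is_norm_minus[of N y] by simp

lemma is_norm_triangle_diff: "is_norm N \<Longrightarrow> N x - N y \<le> N (x - y)"
  using is_norm_triangle[of N "x - y" y] by simp

lemma is_norm_sum_le:
  assumes "is_norm N" shows "N (sum f A) \<le> (\<Sum>a\<in>A. N (f a))"
proof (induction A rule: infinite_finite_induct)
  case (insert x F)
  then show ?case using is_norm_triangle[OF assms, of "f x" "sum f F"] by simp
qed (simp_all add: is_norm_zero[OF assms])

lemma is_norm_le_mult_norm: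
  fixes N :: "'a::euclidean_space \<Rightarrow> real"
  assumes N: "is_norm N" shows "\<exists>K>0. \<forall>x. N x \<le> K * norm x"
proof -
  define K where "K = (\<Sum>b\<in>Basis. N b) + 1"
  have "0 \<le> (\<Sum>b\<in>Basis. N b)" by (intro sum_nonneg is_norm_nonneg[OF N])
  then have "K > 0" by (simp add: K_def)
  moreover have "N x \<le> K * norm x" for x
  proof -
    have "N x = N (\<Sum>b\<in>Basis. (x \<bullet> b) *\<^sub>R b)" by (simp add: euclidean_representation)
    also have "\<dots> \<le> (\<Sum>b\<in>Basis. N ((x \<bullet> b) *\<^sub>R b))" by (rule is_norm_sum_le[OF N])
    also have "\<dots> = (\<Sum>b\<in>Basis. \<bar>x \<bullet> b\<bar> * N b)" by (simp add: is_norm_scaleR[OF N])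
    also have "\<dots> \<le> (\<Sum>b\<in>Basis. norm x * N b)"
      by (intro sum_mono mult_right_mono Basis_le_norm is_norm_nonneg[OF N])
    also have "\<dots> \<le> K * norm x" by (simp add: K_def sum_distrib_left algebra_simps)
    finally show ?thesis .
  qed
  ultimately show ?thesis by blast
qed

text \<open>\<open>N\<close> is Lipschitz for the Euclidean norm, so it attains a positive minimum on the unit sphere.\<close>
lemma is_norm_ge_mult_norm:
  fixes N :: "'a::euclidean_space \<Rightarrow> real"
  assumes N: "is_norm N" shows "\<exists>c>0. \<forall>x. c * norm x \<le> N x"
proof -
  obtain K where K: "K > 0" "\<And>x. N x \<le> K * norm x" using is_norm_le_mult_norm[OF N] by blast
  have "K-lipschitz_on (sphere 0 1) N"
  proof (rule lipschitz_onI)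
    fix x y :: 'a
    show "dist (N x) (N y) \<le> K * dist x y"
      using is_norm_triangle_diff[OF N, of x y] is_norm_triangle_diff[OF N, of y x]
        K(2)[of "x - y"] K(2)[of "y - x"]
      by (simp add: dist_real_def dist_norm norm_minus_commute)
  qed (use K in simp)
  then have cont: "continuous_on (sphere 0 1) N" by (rule lipschitz_on_continuous_on)
  obtain b :: 'a where "b \<in> Basis" using nonempty_Basis by blast
  then have "sphere (0::'a) 1 \<noteq> {}" by (auto intro!: exI[of _ b])
  then obtain x0 where x0: "x0 \<in> sphere 0 1" "\<And>y. y \<in> sphere 0 1 \<Longrightarrow> N x0 \<le> N y"
    using continuous_attains_inf[OF compact_sphere _ cont] by blast
  have "N x0 > 0"
    using x0(1) is_norm_eq_0_iff[OF N, of x0] is_norm_nonneg[OF N, of x0] by auto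
  moreover have "N x0 * norm x \<le> N x" for x
  proof (cases "x = 0")
    case False
    have "N x0 \<le> N (inverse (norm x) *\<^sub>R x)" using x0(2) False by simp
    also have "\<dots> = N x / norm x" by (simp add: is_norm_scaleR[OF N] divide_inverse_commute)
    finally show ?thesis using False by (simp add: field_simps)
  qed (simp add: is_norm_zero[OF N])
  ultimately show ?thesis by blast
qed

lemma is_norm_equivalent:
  fixes N Ns :: "'a::euclidean_space \<Rightarrow> real"
  assumes "is_norm N" "is_norm Ns" shows "\<exists>c>0. \<forall>x. c * N x \<le> Ns x"
proof -
  obtain K where K: "K > 0" "\<And>x. N x \<le> K * norm x" using is_norm_le_mult_norm[OF assms(1)] by blast
  obtain c where c: "c > 0" "\<And>x. c * norm x \<le> Ns x" using is_norm_ge_mult_norm[OF assms(2)] by blast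
  have "c / K * N x \<le> Ns x" for x
  proof -
    have "c / K * N x \<le> c / K * (K * norm x)" using K c by (intro mult_left_mono) auto
    also have "\<dots> = c * norm x" using K by simp
    finally show ?thesis using c(2)[of x] by simp
  qed
  with K c show ?thesis by (intro exI[of _ "c / K"]) auto
qed

lemma Mnorm_INF_nonneg: "(0::real) < \<xi> \<Longrightarrow> 0 \<le> (INF u. (N u)\<^sup>2 / 2 + (Ns (w - u))\<^sup>2 / (2 * \<xi>))"
  by (rule cINF_greatest) simp_all

lemma Mnorm_nonneg: "0 < \<xi> \<Longrightarrow> 0 \<le> Mnorm N Ns \<xi> w"
  by (simp add: Mnorm_def Mnorm_INF_nonneg)

lemma Mnorm_sq: "0 < \<xi> \<Longrightarrow> (Mnorm N Ns \<xi> w)\<^sup>2 = 2 * (INF u. (N u)\<^sup>2 / 2 + (Ns (w - u))\<^sup>2 / (2 * \<xi>))"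
  by (simp add: Mnorm_def Mnorm_INF_nonneg)

lemma Mnorm_le:
  assumes "is_norm N" "is_norm Ns" "0 < \<xi>"
  shows "Mnorm N Ns \<xi> w \<le> N w"
proof -
  have "bdd_below (range (\<lambda>u. (N u)\<^sup>2 / 2 + (Ns (w - u))\<^sup>2 / (2 * \<xi>)))"
    using assms(3) by (intro bdd_belowI[of _ 0]) auto
  then have "(INF u. (N u)\<^sup>2 / 2 + (Ns (w - u))\<^sup>2 / (2 * \<xi>)) \<le> (N w)\<^sup>2 / 2 + (Ns (w - w))\<^sup>2 / (2 * \<xi>)"
    by (rule cINF_lower) simp
  also have "\<dots> = (N w)\<^sup>2 / 2" using is_norm_zero[OF assms(2)] by simp
  finally have "(Mnorm N Ns \<xi> w)\<^sup>2 \<le> (N w)\<^sup>2" using Mnorm_sq[OF assms(3), of N Ns w] by simp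
  then show ?thesis using is_norm_nonneg[OF assms(1)] by (rule power2_le_imp_le)
qed

text \<open>Each candidate \<open>u\<close> in the infimum costs at least \<open>\<mu>/2 (N u\<^sup>2 + N (w - u)\<^sup>2) \<ge> \<mu>/4 (N w)\<^sup>2\<close>.\<close>
lemma mult_le_Mnorm:
  assumes N: "is_norm N" and c: "0 < c" "\<And>x. c * N x \<le> Ns x" and \<xi>: "0 < \<xi>"
  shows "sqrt (min 1 (c\<^sup>2 / \<xi>) / 2) * N w \<le> Mnorm N Ns \<xi> w"
proof -
  define \<mu> where "\<mu> = min 1 (c\<^sup>2 / \<xi>)"
  have \<mu>: "0 < \<mu>" "\<mu> \<le> 1" "\<mu> \<le> c\<^sup>2 / \<xi>" using c \<xi> by (auto simp: \<mu>_def)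
  have "\<mu> * (N w)\<^sup>2 / 4 \<le> (N u)\<^sup>2 / 2 + (Ns (w - u))\<^sup>2 / (2 * \<xi>)" for u
  proof -
    have nonneg: "0 \<le> N u" "0 \<le> N (w - u)" "0 \<le> N w" using is_norm_nonneg[OF N] by auto
    have "N w \<le> N u + N (w - u)" using is_norm_triangle[OF N, of u "w - u"] by simp
    then have "(N w)\<^sup>2 \<le> (N u + N (w - u))\<^sup>2" using nonneg by (simp add: power_mono)
    also have "\<dots> \<le> 2 * ((N u)\<^sup>2 + (N (w - u))\<^sup>2)"
      using zero_le_power2[of "N u - N (w - u)"] by (simp add: power2_eq_square algebra_simps)
    finally have "\<mu> * (N w)\<^sup>2 \<le> \<mu> * (2 * ((N u)\<^sup>2 + (N (w - u))\<^sup>2))"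
      using \<mu> by (intro mult_left_mono) auto
    moreover have "\<mu> * (N u)\<^sup>2 \<le> (N u)\<^sup>2" using \<mu> by (simp add: mult_left_le_one_le)
    moreover have "\<mu> * (N (w - u))\<^sup>2 \<le> (Ns (w - u))\<^sup>2 / \<xi>"
    proof -
      have "\<mu> * (N (w - u))\<^sup>2 \<le> (c * N (w - u))\<^sup>2 / \<xi>"
        using mult_right_mono[OF \<mu>(3) zero_le_power2] by (simp add: power_mult_distrib)
      also have "\<dots> \<le> (Ns (w - u))\<^sup>2 / \<xi>"
        using c nonneg \<xi> by (intro divide_right_mono power_mono) auto
      finally show ?thesis .
    qed
    ultimately show ?thesis by (simp add: field_simps)
  qed
  then have "\<mu> * (N w)\<^sup>2 / 4 \<le> (INF u. (N u)\<^sup>2 / 2 + (Ns (w - u))\<^sup>2 / (2 * \<xi>))"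
    by (intro cINF_greatest) simp_all
  then have "(sqrt (\<mu> / 2) * N w)\<^sup>2 \<le> (Mnorm N Ns \<xi> w)\<^sup>2"
    using \<mu> Mnorm_sq[OF \<xi>, of N Ns w] by (simp add: power_mult_distrib)
  then show ?thesis unfolding \<mu>_def using Mnorm_nonneg[OF \<xi>] by (rule power2_le_imp_le)
qed

lemma le_mult_Mnorm:
  fixes N Ns :: "'a::euclidean_space \<Rightarrow> real"
  assumes "is_norm N" "is_norm Ns" "0 < \<xi>"
  shows "\<exists>D\<ge>1. \<forall>w. N w \<le> D * Mnorm N Ns \<xi> w"
proof -
  obtain c where c: "0 < c" "\<And>x. c * N x \<le> Ns x" using is_norm_equivalent[OF assms(1,2)] by blast
  define e where "e = sqrt (min 1 (c\<^sup>2 / \<xi>) / 2)"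
  have e: "0 < e" "\<And>w. e * N w \<le> Mnorm N Ns \<xi> w"
    using c assms(3) mult_le_Mnorm[OF assms(1) c assms(3)] by (auto simp: e_def)
  have "N w \<le> max 1 (1 / e) * Mnorm N Ns \<xi> w" for w
  proof -
    have "N w \<le> 1 / e * Mnorm N Ns \<xi> w" using e(1) e(2)[of w] by (simp add: field_simps)
    also have "\<dots> \<le> max 1 (1 / e) * Mnorm N Ns \<xi> w"
      using Mnorm_nonneg[OF assms(3)] by (intro mult_right_mono) auto
    finally show ?thesis .
  qed
  then show ?thesis by (intro exI[of _ "max 1 (1 / e)"]) auto
qed

lemma one_le_ln: "3 \<le> x \<Longrightarrow> 1 \<le> ln (x::real)"
  using exp_le ln_le_cancel_iff[of "exp 1" x] by simp

lemma ln_of_nat_plus_3_bounds: "1 \<le> ln (real t + 3)" "ln (real t + 3) \<le> real t + 3"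
  using one_le_ln[of "real t + 3"] ln_le_minus_one[of "real t + 3"] by simp_all

lemma one_le_powr_le_self:
  "1 \<le> (x::real) \<Longrightarrow> 0 \<le> \<nu> \<Longrightarrow> \<nu> \<le> 1 \<Longrightarrow> 1 \<le> x powr \<nu> \<and> x powr \<nu> \<le> x"
  using ge_one_powr_ge_zero[of x \<nu>] powr_mono[of \<nu> 1 x] by simp

lemma ln_ln_diff_le:
  fixes t :: real assumes "0 \<le> t"
  shows "ln (ln (t + 4)) - ln (ln (t + 3)) \<le> 1 / ((t + 3) * ln (t + 3))"
proof -
  define u where "u = ln (t + 3)"
  define v where "v = ln (t + 4)"
  have u: "1 \<le> u" "u \<le> v" unfolding u_def v_def using assms one_le_ln by auto
  have "v - u = ln ((t + 4) / (t + 3))" unfolding u_def v_def using assms by (simp add: ln_div)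
  also have "\<dots> \<le> (t + 4) / (t + 3) - 1" using assms by (intro ln_le_minus_one) auto
  also have "\<dots> = 1 / (t + 3)" using assms by (simp add: field_simps)
  finally have vu: "v - u \<le> 1 / (t + 3)" .
  have "ln v - ln u = ln (v / u)" using u by (simp add: ln_div)
  also have "\<dots> \<le> v / u - 1" using u by (intro ln_le_minus_one) auto
  also have "\<dots> = (v - u) / u" using u by (simp add: field_simps)
  also have "\<dots> \<le> 1 / (t + 3) / u" using vu u by (intro divide_right_mono) auto
  finally show ?thesis by (simp add: u_def v_def)
qed

lemma ln_ln_diff_le_sum:
  "a \<le> k \<Longrightarrow> ln (ln (real k + 3)) - ln (ln (real a + 3))
     \<le> (\<Sum>t\<in>{a..<k}. 1 / ((real t + 3) * ln (real t + 3)))"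
proof (induction k rule: dec_induct)
  case (step k)
  have "real (Suc k) + 3 = real k + 4" by simp
  then have "ln (ln (real (Suc k) + 3)) - ln (ln (real k + 3)) \<le> 1 / ((real k + 3) * ln (real k + 3))"
    by (metis ln_ln_diff_le of_nat_0_le_iff)
  with step show ?case by simp
qed simp

lemma partial_sums_unbounded:
  fixes \<alpha> :: "nat \<Rightarrow> real"
  assumes c: "0 < c" and lb: "\<And>t. c / ((real t + 3) * ln (real t + 3)) \<le> \<alpha> t"
  shows "\<exists>k. x \<le> (\<Sum>t\<in>{a..<k}. \<alpha> t)"
proof -
  define M where "M = ln (ln (real a + 3)) + x / c"
  define k where "k = max a (nat \<lceil>exp (exp M)\<rceil>)"
  have "exp (exp M) \<le> real (nat \<lceil>exp (exp M)\<rceil>)" by (rule real_nat_ceiling_ge)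
  also have "\<dots> \<le> real k" by (simp add: k_def)
  finally have "exp (exp M) \<le> real k + 3" by simp
  then have "exp M \<le> ln (real k + 3)" using ln_le_cancel_iff[of "exp (exp M)"] by simp
  then have "M \<le> ln (ln (real k + 3))" using ln_le_cancel_iff[of "exp M"] by simp
  then have "x \<le> c * (ln (ln (real k + 3)) - ln (ln (real a + 3)))"
    using c by (simp add: M_def field_simps)
  also have "\<dots> \<le> c * (\<Sum>t\<in>{a..<k}. 1 / ((real t + 3) * ln (real t + 3)))"
    using ln_ln_diff_le_sum[of a k] c by (simp add: k_def)
  also have "\<dots> \<le> (\<Sum>t\<in>{a..<k}. \<alpha> t)"
    using lb by (simp add: sum_distrib_left sum_mono)
  finally show ?thesis by blast
qed

text \<open>Common properties of the setups (a)--(c); the last one makes the anchors well defined.\<close>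
definition admissible_schedule :: "real \<Rightarrow> (nat \<Rightarrow> real) \<Rightarrow> (nat \<Rightarrow> real) \<Rightarrow> bool" where
  "admissible_schedule C \<alpha> T \<longleftrightarrow> (\<forall>t. 0 \<le> \<alpha> t) \<and> antimono \<alpha> \<and> (\<forall>m. \<alpha> m \<le> T m)
     \<and> (\<forall>m. 0 < T m \<and> T m \<le> C) \<and> (\<forall>a x. \<exists>k. x \<le> (\<Sum>t\<in>{a..<k}. \<alpha> t))"

lemma admissible_scheduleI:
  assumes "0 < C" "antimono \<alpha>" "\<And>m. \<alpha> m \<le> T m" "\<And>m. 0 < T m" "\<And>m. T m \<le> C"
    and lb: "\<And>t. C / ((real t + 3) * ln (real t + 3)) \<le> \<alpha> t"
  shows "admissible_schedule C \<alpha> T"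
proof -
  have "0 \<le> \<alpha> t" for t
  proof -
    have "0 < C / ((real t + 3) * ln (real t + 3))"
      using \<open>0 < C\<close> ln_of_nat_plus_3_bounds(1)[of t] by (intro divide_pos_pos mult_pos_pos) simp_all
    with lb[of t] show ?thesis by linarith
  qed
  then show ?thesis
    unfolding admissible_schedule_def using assms partial_sums_unbounded[OF \<open>0 < C\<close> lb] by blast
qed

lemma setup_a_admissible:
  assumes C: "0 < C" and "setup_a C \<alpha> T" shows "admissible_schedule C \<alpha> T"
proof -
  obtain \<nu> where \<nu>: "0 < \<nu>" "\<nu> < 1" and \<alpha>: "\<alpha> = (\<lambda>t. C / (real t + 3))"
    and T: "T = (\<lambda>m. C * ln (real m + 3) powr \<nu> / (real m + 3))"
    using assms(2) unfolding setup_a_def by blast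
  have p: "1 \<le> ln (real t + 3) powr \<nu>" "ln (real t + 3) powr \<nu> \<le> real t + 3" for t
    using one_le_powr_le_self[OF ln_of_nat_plus_3_bounds(1)[of t], of \<nu>] \<nu>
      ln_of_nat_plus_3_bounds(2)[of t] by auto
  show ?thesis unfolding \<alpha> T
  proof (rule admissible_scheduleI)
    show "antimono (\<lambda>t. C / (real t + 3))" using C by (intro antimonoI divide_left_mono) auto
    show "C / (real m + 3) \<le> C * ln (real m + 3) powr \<nu> / (real m + 3)" for m
      using C p(1)[of m] by (intro divide_right_mono) simp_all
    show "0 < C * ln (real m + 3) powr \<nu> / (real m + 3)" for m
      using C p(1)[of m] by simp
    show "C * ln (real m + 3) powr \<nu> / (real m + 3) \<le> C" for m
      using C p(2)[of m] by (simp add: pos_divide_le_eq)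
    show "C / ((real t + 3) * ln (real t + 3)) \<le> C / (real t + 3)" for t
      using C ln_of_nat_plus_3_bounds(1)[of t] by (intro divide_left_mono) simp_all
  qed (rule C)
qed

lemma setup_b_admissible:
  assumes C: "0 < C" and "setup_b C \<alpha> T" shows "admissible_schedule C \<alpha> T"
proof -
  obtain \<nu> \<nu>2 where \<nu>: "2/3 < \<nu>" "\<nu> < 1" "1/2 < \<nu>2" "\<nu>2 < \<nu> / (2 - \<nu>)"
    and \<alpha>: "\<alpha> = (\<lambda>t. C / (real t + 3) powr \<nu>)" and T: "T = (\<lambda>m. C / (real m + 3) powr \<nu>2)"
    using assms(2) unfolding setup_b_def by blast
  have "\<nu> / (2 - \<nu>) \<le> \<nu>" using \<nu> by (simp add: divide_le_eq algebra_simps)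
  then have "\<nu>2 \<le> \<nu>" using \<nu> by linarith
  have p1: "1 \<le> (real t + 3) powr \<nu>2" for t
    using \<nu> by (intro ge_one_powr_ge_zero) auto
  have p2: "(real t + 3) powr \<nu>2 \<le> (real t + 3) powr \<nu>" for t
    using \<open>\<nu>2 \<le> \<nu>\<close> by (intro powr_mono) auto
  have p3: "(real t + 3) powr \<nu> \<le> (real t + 3) * ln (real t + 3)" for t
  proof -
    have "(real t + 3) powr \<nu> \<le> real t + 3"
      using one_le_powr_le_self[of "real t + 3" \<nu>] \<nu> by simp
    also have "\<dots> \<le> (real t + 3) * ln (real t + 3)"
      using ln_of_nat_plus_3_bounds(1)[of t] by (simp add: mult_le_cancel_left1)
    finally show ?thesis .
  qed
  show ?thesis unfolding \<alpha> T
  proof (rule admissible_scheduleI)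
    show "antimono (\<lambda>t. C / (real t + 3) powr \<nu>)"
    proof (rule antimonoI)
      fix s t :: nat assume "s \<le> t"
      then have "(real s + 3) powr \<nu> \<le> (real t + 3) powr \<nu>"
        using \<nu> by (intro powr_mono2) auto
      then show "C / (real t + 3) powr \<nu> \<le> C / (real s + 3) powr \<nu>"
        using C by (intro divide_left_mono) simp_all
    qed
    show "C / (real m + 3) powr \<nu> \<le> C / (real m + 3) powr \<nu>2" for m
      using C p2[of m] by (intro divide_left_mono) simp_all
    show "0 < C / (real m + 3) powr \<nu>2" for m
      using C by simp
    show "C / (real m + 3) powr \<nu>2 \<le> C" for m
      using C p1[of m] by (simp add: divide_le_eq)
    show "C / ((real t + 3) * ln (real t + 3)) \<le> C / (real t + 3) powr \<nu>" for t
      using C p3[of t] by (intro divide_left_mono) simp_all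
  qed (rule C)
qed

lemma setup_c_admissible:
  assumes C: "0 < C" and "setup_c C \<alpha> T" shows "admissible_schedule C \<alpha> T"
proof -
  obtain \<nu> where \<nu>: "0 < \<nu>" "\<nu> < 1"
    and \<alpha>: "\<alpha> = (\<lambda>t. C / ((real t + 3) * ln (real t + 3) powr \<nu>))" and T: "T = (\<lambda>m. C / (real m + 3))"
    using assms(2) unfolding setup_c_def by blast
  have p: "1 \<le> ln (real t + 3) powr \<nu>" "ln (real t + 3) powr \<nu> \<le> ln (real t + 3)" for t
    using one_le_powr_le_self[OF ln_of_nat_plus_3_bounds(1)[of t], of \<nu>] \<nu> by auto
  show ?thesis unfolding \<alpha> T
  proof (rule admissible_scheduleI)
    show "antimono (\<lambda>t. C / ((real t + 3) * ln (real t + 3) powr \<nu>))"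
    proof (rule antimonoI)
      fix s t :: nat assume "s \<le> t"
      then have "ln (real s + 3) powr \<nu> \<le> ln (real t + 3) powr \<nu>"
        using ln_of_nat_plus_3_bounds(1)[of s] \<nu> by (intro powr_mono2) auto
      with \<open>s \<le> t\<close> p(1)[of s]
      have "(real s + 3) * ln (real s + 3) powr \<nu> \<le> (real t + 3) * ln (real t + 3) powr \<nu>"
        by (intro mult_mono) auto
      then show "C / ((real t + 3) * ln (real t + 3) powr \<nu>) \<le> C / ((real s + 3) * ln (real s + 3) powr \<nu>)"
        using C p(1)[of s] by (intro divide_left_mono) simp_all
    qed
    show "C / ((real m + 3) * ln (real m + 3) powr \<nu>) \<le> C / (real m + 3)" for m
      using C p(1)[of m] by (intro divide_left_mono) (simp_all add: mult_le_cancel_left1)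
    show "0 < C / (real m + 3)" for m
      using C by simp
    show "C / (real m + 3) \<le> C" for m
      using C by (simp add: divide_le_eq)
    show "C / ((real t + 3) * ln (real t + 3)) \<le> C / ((real t + 3) * ln (real t + 3) powr \<nu>)" for t
      using C p[of t] by (intro divide_left_mono mult_left_mono) simp_all
  qed (rule C)
qed

lemma anchor_less_Suc:
  assumes "admissible_schedule C \<alpha> T" shows "anchor \<alpha> T m < anchor \<alpha> T (Suc m)"
proof -
  let ?P = "\<lambda>k. T m \<le> (\<Sum>t\<in>{anchor \<alpha> T m..<k}. \<alpha> t)"
  have "\<exists>k. ?P k" using assms by (simp add: admissible_schedule_def)
  then have "?P (LEAST k. ?P k)" by (rule LeastI_ex)
  then have "?P (anchor \<alpha> T (Suc m))" by simp
  moreover have "\<not> ?P k" if "k \<le> anchor \<alpha> T m" for k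
    using that assms by (simp add: admissible_schedule_def not_le)
  ultimately show ?thesis by (meson not_le)
qed

lemma le_anchor: "admissible_schedule C \<alpha> T \<Longrightarrow> m \<le> anchor \<alpha> T m"
proof (induction m)
  case (Suc m)
  then show ?case using anchor_less_Suc[OF Suc.prems, of m] by simp
qed simp

lemma sum_anchor_block_le:
  assumes adm: "admissible_schedule C \<alpha> T"
  shows "(\<Sum>t\<in>{anchor \<alpha> T m..<anchor \<alpha> T (Suc m)}. \<alpha> t) \<le> 2 * T m"
proof -
  define a where "a = anchor \<alpha> T m"
  define b where "b = anchor \<alpha> T (Suc m)"
  obtain k where k: "b = Suc k" "a \<le> k"
    using anchor_less_Suc[OF adm, of m] by (auto simp: a_def b_def less_iff_Suc_add)
  have "k < (LEAST k. T m \<le> (\<Sum>t\<in>{a..<k}. \<alpha> t))" using k by (simp add: a_def b_def)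
  then have "(\<Sum>t\<in>{a..<k}. \<alpha> t) < T m" by (rule not_less_Least[THEN not_le_imp_less])
  moreover have "\<alpha> k \<le> T m"
  proof -
    have "m \<le> k" using le_anchor[OF adm, of m] k(2) by (simp add: a_def)
    then have "\<alpha> k \<le> \<alpha> m" using adm by (simp add: admissible_schedule_def antimonoD)
    also have "\<dots> \<le> T m" using adm by (simp add: admissible_schedule_def)
    finally show ?thesis .
  qed
  moreover have "(\<Sum>t\<in>{a..<b}. \<alpha> t) = (\<Sum>t\<in>{a..<k}. \<alpha> t) + \<alpha> k" using k by simp
  ultimately show ?thesis by (simp add: a_def b_def)
qed

lemma discrete_gronwall:
  fixes e s :: "nat \<Rightarrow> real"
  assumes "e a = 0" and growth: "\<And>t. a \<le> t \<Longrightarrow> e (Suc t) \<le> e t + s t * (L * e t + A)"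
    and s: "\<And>t. 0 \<le> s t" and L: "0 \<le> L" and A: "0 \<le> A" and "a \<le> t"
  shows "e t \<le> A * (\<Sum>i\<in>{a..<t}. s i) * exp (L * (\<Sum>i\<in>{a..<t}. s i))"
  using \<open>a \<le> t\<close>
proof (induction t rule: dec_induct)
  case base
  then show ?case using \<open>e a = 0\<close> by simp
next
  case (step t)
  define S where "S = (\<Sum>i\<in>{a..<t}. s i)"
  have S: "0 \<le> S" unfolding S_def using s by (simp add: sum_nonneg)
  have g: "1 \<le> 1 + L * s t" using L s by simp
  have "1 * 1 \<le> (1 + L * s t) * exp (L * S)" using g S L by (intro mult_mono) auto
  moreover have "0 \<le> s t * A" using s[of t] A by simp
  ultimately have "s t * A \<le> (1 + L * s t) * exp (L * S) * (s t * A)"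
    by (simp add: mult_le_cancel_right1)
  moreover have "(1 + L * s t) * e t \<le> (1 + L * s t) * (A * S * exp (L * S))"
    using step.IH g by (simp add: S_def)
  moreover have "e (Suc t) \<le> (1 + L * s t) * e t + s t * A"
    using growth[OF step.hyps(1)] by (simp add: algebra_simps)
  ultimately have "e (Suc t) \<le> A * (S + s t) * exp (L * S) * (1 + L * s t)"
    by (simp add: algebra_simps)
  also have "\<dots> \<le> A * (S + s t) * exp (L * S) * exp (L * s t)"
    using A S s by (intro mult_left_mono exp_ge_add_one_self[of "L * s t", simplified add.commute]) simp_all
  also have "\<dots> = A * (S + s t) * exp (L * (S + s t))" by (simp add: distrib_left exp_add)
  finally show ?case using step.hyps by (simp add: S_def)
qed

lemma G_lipschitz:
  fixes H :: "'a::real_vector \<Rightarrow> 'y \<Rightarrow> 'a"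
  assumes N: "is_norm N" and lip: "\<And>u v. N (H u y - H v y) \<le> L * N (u - v)"
  shows "N ((H u y - u) - (H v y - v)) \<le> (\<bar>L\<bar> + 1) * N (u - v)"
proof -
  have "N ((H u y - u) - (H v y - v)) = N ((H u y - H v y) - (u - v))" by (simp add: algebra_simps)
  also have "\<dots> \<le> L * N (u - v) + N (u - v)"
    using is_norm_diff_le[OF N, of "H u y - H v y" "u - v"] lip[of u v] by simp
  also have "\<dots> \<le> (\<bar>L\<bar> + 1) * N (u - v)"
    using is_norm_nonneg[OF N, of "u - v"] by (simp add: distrib_right mult_right_mono)
  finally show ?thesis .
qed

lemma G_linear_growth:
  fixes H :: "'a::real_vector \<Rightarrow> 'y \<Rightarrow> 'a"
  assumes N: "is_norm N" and lip: "\<And>u v. N (H u y - H v y) \<le> L * N (u - v)" and "N (H 0 y) \<le> B"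
  shows "N (H w y - w) \<le> ((\<bar>L\<bar> + 1) * (1 + N wstar) + \<bar>B\<bar>) * (N (w - wstar) + 1)"
proof -
  have G: "N ((H w y - w) - (H 0 y - 0)) \<le> (\<bar>L\<bar> + 1) * N (w - 0)"
    by (rule G_lipschitz[OF N]) (rule lip)
  have "N (H w y - w) = N ((H w y - w) - (H 0 y - 0) + H 0 y)" by simp
  also have "\<dots> \<le> (\<bar>L\<bar> + 1) * N w + \<bar>B\<bar>"
    using is_norm_triangle[OF N, of "(H w y - w) - (H 0 y - 0)" "H 0 y"] G \<open>N (H 0 y) \<le> B\<close> by simp
  also have "\<dots> \<le> (\<bar>L\<bar> + 1) * (N (w - wstar) + N wstar) + \<bar>B\<bar>"
    using is_norm_triangle[OF N, of "w - wstar" wstar] by (simp add: mult_left_mono)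
  also have "\<dots> \<le> ((\<bar>L\<bar> + 1) * (1 + N wstar) + \<bar>B\<bar>) * (N (w - wstar) + 1)"
    using is_norm_nonneg[OF N, of wstar] is_norm_nonneg[OF N, of "w - wstar"]
    by (simp add: algebra_simps mult_right_mono)
  finally show ?thesis .
qed

lemma iter_displacement_le:
  fixes H :: "'a::real_vector \<Rightarrow> 'y \<Rightarrow> 'a" and \<alpha> :: "nat \<Rightarrow> real" and w0 :: 'a and Y :: "nat \<Rightarrow> 'y"
  defines "w \<equiv> iter H \<alpha> w0 Y"
  assumes N: "is_norm N"
    and G_lip: "\<And>u v y. y \<in> S \<Longrightarrow> N ((H u y - u) - (H v y - v)) \<le> L * N (u - v)"
    and G_bdd: "\<And>y. y \<in> S \<Longrightarrow> N (H (w a) y - w a) \<le> A"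
    and \<alpha>: "\<And>t. 0 \<le> \<alpha> t" and "0 \<le> L" "0 \<le> A" and Y: "\<And>t. Y t \<in> S" and "a \<le> t"
  shows "N (w t - w a) \<le> A * (\<Sum>i\<in>{a..<t}. \<alpha> i) * exp (L * (\<Sum>i\<in>{a..<t}. \<alpha> i))"
proof (rule discrete_gronwall[where e = "\<lambda>t. N (w t - w a)"])
  fix t
  let ?G = "\<lambda>u. H u (Y (Suc t)) - u"
  have "N (?G (w t)) \<le> N (?G (w t) - ?G (w a)) + N (?G (w a))"
    using is_norm_triangle[OF N, of "?G (w t) - ?G (w a)" "?G (w a)"] by simp
  also have "\<dots> \<le> L * N (w t - w a) + A" using G_lip[OF Y] G_bdd[OF Y] by (intro add_mono)
  finally have G_le: "N (?G (w t)) \<le> L * N (w t - w a) + A" .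
  have "w (Suc t) - w a = (w t - w a) + \<alpha> t *\<^sub>R ?G (w t)" by (simp add: w_def)
  then have "N (w (Suc t) - w a) \<le> N (w t - w a) + \<alpha> t * N (?G (w t))"
    using is_norm_triangle[OF N] is_norm_scaleR[OF N] \<alpha>[of t] by (metis abs_of_nonneg)
  also have "\<dots> \<le> N (w t - w a) + \<alpha> t * (L * N (w t - w a) + A)"
    using G_le \<alpha>[of t] by (simp add: mult_left_mono)
  finally show "N (w (Suc t) - w a) \<le> N (w t - w a) + \<alpha> t * (L * N (w t - w a) + A)" .
qed (use assms is_norm_zero[OF N] in simp_all)

lemma z1_le:
  fixes H :: "'a::real_vector \<Rightarrow> 'y \<Rightarrow> 'a" and \<alpha> T :: "nat \<Rightarrow> real" and w0 :: 'a
    and Y :: "nat \<Rightarrow> 'y" and m :: nat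
  defines "w \<equiv> iter H \<alpha> w0 Y" and "a \<equiv> anchor \<alpha> T m" and "b \<equiv> anchor \<alpha> T (Suc m)"
  assumes N: "is_norm N"
    and G_lip: "\<And>u v y. y \<in> S \<Longrightarrow> N ((H u y - u) - (H v y - v)) \<le> L * N (u - v)"
    and G_bdd: "\<And>y. y \<in> S \<Longrightarrow> N (H (w a) y - w a) \<le> A"
    and \<alpha>: "\<And>t. 0 \<le> \<alpha> t" and L: "0 \<le> L" and A: "0 \<le> A" and Y: "\<And>t. Y t \<in> S"
  shows "N (z1 H \<alpha> T w0 Y m) \<le> L * A * (\<Sum>t\<in>{a..<b}. \<alpha> t)\<^sup>2 * exp (L * (\<Sum>t\<in>{a..<b}. \<alpha> t))"
proof -
  define Sb where "Sb = (\<Sum>t\<in>{a..<b}. \<alpha> t)"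
  let ?G = "\<lambda>u t. H u (Y (Suc t)) - u"
  have "z1 H \<alpha> T w0 Y m = (\<Sum>t\<in>{a..<b}. \<alpha> t *\<^sub>R (?G (w t) t - ?G (w a) t))"
    by (simp add: z1_def Let_def w_def a_def b_def)
  then have "N (z1 H \<alpha> T w0 Y m) \<le> (\<Sum>t\<in>{a..<b}. N (\<alpha> t *\<^sub>R (?G (w t) t - ?G (w a) t)))"
    by (simp add: is_norm_sum_le[OF N])
  also have "\<dots> \<le> (\<Sum>t\<in>{a..<b}. \<alpha> t * (L * (A * Sb * exp (L * Sb))))"
  proof (rule sum_mono)
    fix t assume t: "t \<in> {a..<b}"
    have St: "0 \<le> (\<Sum>i\<in>{a..<t}. \<alpha> i)" "(\<Sum>i\<in>{a..<t}. \<alpha> i) \<le> Sb"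
      using t \<alpha> by (auto simp: Sb_def intro: sum_nonneg sum_mono2)
    have "N (w t - w a) \<le> A * (\<Sum>i\<in>{a..<t}. \<alpha> i) * exp (L * (\<Sum>i\<in>{a..<t}. \<alpha> i))"
      unfolding w_def using t by (intro iter_displacement_le[OF N G_lip _ \<alpha> L A Y]) (auto simp: G_bdd[unfolded w_def])
    also have "\<dots> \<le> A * Sb * exp (L * Sb)"
      using St A L by (intro mult_mono mult_left_mono) (auto simp: mult_left_mono)
    finally have "N (?G (w t) t - ?G (w a) t) \<le> L * (A * Sb * exp (L * Sb))"
      using G_lip[OF Y[of "Suc t"], of "w t" "w a"] L by (meson mult_left_mono order_trans)
    then show "N (\<alpha> t *\<^sub>R (?G (w t) t - ?G (w a) t)) \<le> \<alpha> t * (L * (A * Sb * exp (L * Sb)))"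
      using \<alpha>[of t] by (simp add: is_norm_scaleR[OF N] mult_left_mono)
  qed
  also have "\<dots> = Sb * (L * (A * Sb * exp (L * Sb)))"
    unfolding Sb_def by (rule sum_distrib_right[symmetric])
  also have "\<dots> = L * A * Sb\<^sup>2 * exp (L * Sb)"
    by (simp add: power2_eq_square algebra_simps)
  finally show ?thesis by (simp add: Sb_def)
qed

lemma z1_le_block_length_sq:
  fixes H :: "'a::real_vector \<Rightarrow> 'y \<Rightarrow> 'a"
  assumes adm: "admissible_schedule C \<alpha> T" and N: "is_norm N"
    and lip: "\<forall>w w'. \<forall>y\<in>S. N (H w y - H w' y) \<le> L * N (w - w')"
    and bdd: "\<forall>y\<in>S. N (H 0 y) \<le> B"
  shows "\<exists>K\<ge>0. \<forall>Y. (\<forall>t. Y t \<in> S) \<longrightarrow> (\<forall>m. N (z1 H \<alpha> T w0 Y m)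
           \<le> (T m)\<^sup>2 * K * (N (iter H \<alpha> w0 Y (anchor \<alpha> T m) - wstar) + 1))"
proof -
  define Lp where "Lp = \<bar>L\<bar> + 1"
  define A0 where "A0 = Lp * (1 + N wstar) + \<bar>B\<bar>"
  have Lp: "0 \<le> Lp" and A0: "0 \<le> A0"
    using is_norm_nonneg[OF N, of wstar] by (simp_all add: Lp_def A0_def)
  have \<alpha>: "\<And>t. 0 \<le> \<alpha> t" and T: "0 < T m" "T m \<le> C" for m
    using adm by (auto simp: admissible_schedule_def)
  show ?thesis
  proof (intro exI[of _ "4 * Lp * A0 * exp (2 * Lp * C)"] conjI allI impI)
    show "0 \<le> 4 * Lp * A0 * exp (2 * Lp * C)" using Lp A0 by simp
  next
    fix Y :: "nat \<Rightarrow> 'y" and m :: nat assume Y: "\<forall>t. Y t \<in> S"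
    define a where "a = anchor \<alpha> T m"
    define R where "R = N (iter H \<alpha> w0 Y a - wstar) + 1"
    define Sb where "Sb = (\<Sum>t\<in>{a..<anchor \<alpha> T (Suc m)}. \<alpha> t)"
    have R: "0 \<le> R" using is_norm_nonneg[OF N] by (simp add: R_def add_nonneg_nonneg)
    have Sb: "0 \<le> Sb" "Sb \<le> 2 * T m"
      using \<alpha> sum_anchor_block_le[OF adm, of m] by (auto simp: Sb_def a_def intro: sum_nonneg)
    have "Sb\<^sup>2 \<le> (2 * T m)\<^sup>2" using Sb by (intro power_mono) simp_all
    have "Sb \<le> 2 * C" using Sb T[of m] by linarith
    then have "exp (Lp * Sb) \<le> exp (Lp * (2 * C))" using Lp by (simp add: mult_left_mono)
    have "N (z1 H \<alpha> T w0 Y m) \<le> Lp * (A0 * R) * Sb\<^sup>2 * exp (Lp * Sb)"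
      unfolding Sb_def a_def R_def Lp_def A0_def
    proof (rule z1_le[OF N _ _ \<alpha>])
      show "N ((H u y - u) - (H v y - v)) \<le> (\<bar>L\<bar> + 1) * N (u - v)" if "y \<in> S" for u v y
        using that lip by (intro G_lipschitz[OF N]) auto
      show "N (H (iter H \<alpha> w0 Y (anchor \<alpha> T m)) y - iter H \<alpha> w0 Y (anchor \<alpha> T m))
          \<le> ((\<bar>L\<bar> + 1) * (1 + N wstar) + \<bar>B\<bar>) * (N (iter H \<alpha> w0 Y (anchor \<alpha> T m) - wstar) + 1)"
        if "y \<in> S" for y
        using that lip bdd by (intro G_linear_growth[OF N]) auto
    qed (use Y Lp A0 R in \<open>auto simp: Lp_def A0_def R_def a_def\<close>)
    also have "\<dots> \<le> Lp * (A0 * R) * (2 * T m)\<^sup>2 * exp (Lp * (2 * C))"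
      using \<open>Sb\<^sup>2 \<le> (2 * T m)\<^sup>2\<close> \<open>exp (Lp * Sb) \<le> exp (Lp * (2 * C))\<close> Lp A0 R
      by (intro mult_mono mult_left_mono) simp_all
    also have "\<dots> = (T m)\<^sup>2 * (4 * Lp * A0 * exp (2 * Lp * C)) * R"
      by (simp add: power2_eq_square algebra_simps)
    finally show "N (z1 H \<alpha> T w0 Y m)
        \<le> (T m)\<^sup>2 * (4 * Lp * A0 * exp (2 * Lp * C)) * (N (iter H \<alpha> w0 Y (anchor \<alpha> T m) - wstar) + 1)"
      by (simp add: R_def a_def)
  qed
qed

theorem lemma5:
  fixes MY :: "'y measure" and P :: "'y \<Rightarrow> 'y measure" and d :: "'y measure"
    and H :: "real^'d \<Rightarrow> 'y \<Rightarrow> real^'d" and N Ns :: "real^'d \<Rightarrow> real"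
    and \<kappa> L\<^sub>h C\<alpha> \<xi> :: real and wstar w0 :: "real^'d"
    and \<alpha> T :: "nat \<Rightarrow> real"
  assumes kernel: "P \<in> MY \<rightarrow>\<^sub>M subprob_algebra MY" "\<forall>y\<in>space MY. prob_space (P y)"
    and stat: "prob_space d" "sets d = sets MY" "bind d P = d"
    and stat_unique: "\<forall>q. prob_space q \<and> sets q = sets MY \<and> bind q P = q \<longrightarrow> q = d"
    and mixing: "\<exists>C\<^sub>A \<rho>. 0 \<le> \<rho> \<and> \<rho> < 1 \<and> (\<forall>y\<in>space MY. \<forall>n. \<forall>A\<in>sets MY.
                   \<bar>measure (kernel_pow MY P n y) A - measure d A\<bar> \<le> C\<^sub>A * \<rho> ^ n)"
    and H_meas: "\<forall>w. H w \<in> borel_measurable MY"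
    and norm: "is_norm N"
    and contr: "0 \<le> \<kappa>" "\<kappa> < 1"
      "\<forall>w w'. N ((\<integral>y. H w y \<partial>d) - (\<integral>y. H w' y \<partial>d)) \<le> \<kappa> * N (w - w')"
    and fixpt: "(\<integral>y. H wstar y \<partial>d) = wstar"
    and lip: "\<forall>w w'. \<forall>y\<in>space MY. N (H w y - H w' y) \<le> L\<^sub>h * N (w - w')"
    and bdd: "\<exists>B. \<forall>y\<in>space MY. N (H 0 y) \<le> B"
    and smooth: "is_norm Ns" "half_sq_smooth Ns" "\<xi> > 0"
    and lr: "C\<alpha> > 0" "setup_a C\<alpha> \<alpha> T \<or> setup_b C\<alpha> \<alpha> T \<or> setup_c C\<alpha> \<alpha> T"
  shows "\<exists>C::real. \<exists>m0::nat. \<forall>Y::nat \<Rightarrow> 'y. (\<forall>t. Y t \<in> space MY) \<longrightarrow>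
           (\<forall>m\<ge>m0. Mnorm N Ns \<xi> (z1 H \<alpha> T w0 Y m)
              \<le> (T m)\<^sup>2 * C * (Mnorm N Ns \<xi> (iter H \<alpha> w0 Y (anchor \<alpha> T m) - wstar) + 1))"
proof -
  have adm: "admissible_schedule C\<alpha> \<alpha> T"
    using lr setup_a_admissible setup_b_admissible setup_c_admissible by blast
  obtain B where B: "\<forall>y\<in>space MY. N (H 0 y) \<le> B" using bdd by blast
  have "\<exists>K\<ge>0. \<forall>Y. (\<forall>t. Y t \<in> space MY) \<longrightarrow> (\<forall>m. N (z1 H \<alpha> T w0 Y m)
      \<le> (T m)\<^sup>2 * K * (N (iter H \<alpha> w0 Y (anchor \<alpha> T m) - wstar) + 1))"
    by (rule z1_le_block_length_sq[OF adm norm lip B])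
  then obtain K where "0 \<le> K" and K: "\<forall>Y. (\<forall>t. Y t \<in> space MY) \<longrightarrow> (\<forall>m. N (z1 H \<alpha> T w0 Y m)
      \<le> (T m)\<^sup>2 * K * (N (iter H \<alpha> w0 Y (anchor \<alpha> T m) - wstar) + 1))"
    by blast
  obtain D where D: "1 \<le> D" "\<And>w. N w \<le> D * Mnorm N Ns \<xi> w"
    using le_mult_Mnorm[OF norm smooth(1) smooth(3)] by blast
  show ?thesis
  proof (intro exI[of _ "K * D"] exI[of _ 0] allI impI)
    fix Y :: "nat \<Rightarrow> 'y" and m :: nat assume Y: "\<forall>t. Y t \<in> space MY"
    define e where "e = iter H \<alpha> w0 Y (anchor \<alpha> T m) - wstar"
    have "N e + 1 \<le> D * (Mnorm N Ns \<xi> e + 1)" using D(1) D(2)[of e] by (simp add: distrib_left)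
    have "Mnorm N Ns \<xi> (z1 H \<alpha> T w0 Y m) \<le> N (z1 H \<alpha> T w0 Y m)"
      by (rule Mnorm_le[OF norm smooth(1) smooth(3)])
    also have "\<dots> \<le> (T m)\<^sup>2 * K * (N e + 1)" using K Y by (simp add: e_def)
    also have "\<dots> \<le> (T m)\<^sup>2 * K * (D * (Mnorm N Ns \<xi> e + 1))"
      using \<open>N e + 1 \<le> D * (Mnorm N Ns \<xi> e + 1)\<close> \<open>0 \<le> K\<close> by (intro mult_left_mono) auto
    finally show "Mnorm N Ns \<xi> (z1 H \<alpha> T w0 Y m)
        \<le> (T m)\<^sup>2 * (K * D) * (Mnorm N Ns \<xi> (iter H \<alpha> w0 Y (anchor \<alpha> T m) - wstar) + 1)"
      by (simp add: e_def mult.assoc)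
  qed
qed

end
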